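(* Under the setting and assumptions (A1)–(A5) described in the context, define for $t\ge 0$ \[ S(t)=\tilde S e^{(\beta/\gamma)\tilde R}\varphi^{-1}(t),\qquad E(t)=\tilde E e^{-\delta t}+\tilde S e^{(\beta/\gamma)\tilde R}e^{-\delta t}\int_{\varphi^{-1}(t)}^{e^{-(\beta/\gamma)\tilde R}}e^{\delta\varphi(v)}\,dv, \] \[ I(t)=N-\tilde S e^{(\beta/\gamma)\tilde R}\varphi^{-1}(t)+\frac{\gamma}{\beta}\log\varphi^{-1}(t)-\tilde E e^{-\delta t}-\tilde S e^{(\beta/\gamma)\tilde R}e^{-\delta t}\int_{\varphi^{-1}(t)}^{e^{-(\beta/\gamma)\tilde R}}e^{\delta\varphi(v)}\,dv, \qquad R(t)=-\frac{\gamma}{\beta}\log\varphi^{-1}(t). \] Then $(S(t),E(t),I(t),R(t))$ is a solution of the initial value problem $S'=-\beta SI$, $E'=\beta SI-\delta E$, $I'=\delta E-\gamma I$, $R'=\gamma I$ for $t>0$, with $S(0)=\tilde S$, $E(0)=\tilde E$, $I(0)=\tilde I$, $R(0)=\tilde R$.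
   Context: Let $\beta,\gamma,\delta>0$ be constants and $\tilde S,\tilde E,\tilde I,\tilde R$ real numbers with $N:=\tilde S+\tilde E+\tilde I+\tilde R>0$. The SEIR initial value problem is $S'(t)=-\beta S(t)I(t)$, $E'(t)=\beta S(t)I(t)-\delta E(t)$, $I'(t)=\delta E(t)-\gamma I(t)$, $R'(t)=\gamma I(t)$ for $t>0$, with $S(0)=\tilde S$, $E(0)=\tilde E$, $I(0)=\tilde I$, $R(0)=\tilde R$; a solution is a vector function $(S,E,I,R)$ of class $C^1(0,\infty)\cap C[0,\infty)$ satisfying these. Standing assumptions: (A1) $\tilde I>0$; (A2) $\tilde E>(\gamma/\delta)\tilde I$; (A3) $\tilde S>\delta\tilde E/(\beta\tilde I)$; (A4) $\tilde R\ge 0$ and $N>\tilde S e^{(\beta/\gamma)\tilde R}+\tilde R$. Let $\alpha$ be the unique solution in $(\tilde R,N)$ of $x=N-\tilde S e^{(\beta/\gamma)\tilde R}e^{-(\beta/\gamma)x}$, and assume (A5) $\tilde S<(\gamma/\beta)e^{(\beta/\gamma)(\alpha-\tilde R)}$. Put $u_0:=e^{-(\beta/\gamma)\tilde R}$, $u_\infty:=e^{-(\beta/\gamma)\alpha}$ (so $0<u_\infty<u_0$). Let $\psi$ be the unique function, continuous and positive on $(u_\infty,u_0]$ and $C^1$ on $(u_\infty,u_0)$, satisfying the Abel equation $\psi'(u)\psi(u)-\frac{\gamma+\delta}{u}\psi(u)=-\delta\,\frac{\beta N-\beta\tilde S e^{(\beta/\gamma)\tilde R}u+\gamma\log u}{u}$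 for $u\in(u_\infty,u_0)$ and $\psi(u_0)=\beta\tilde I$. Let $\varphi(u):=\int_u^{u_0}\frac{d\xi}{\xi\psi(\xi)}$ for $u\in(u_\infty,u_0]$; $\varphi$ is a strictly decreasing continuous bijection from $(u_\infty,u_0]$ onto $[0,\infty)$, of class $C^1$ on $(u_\infty,u_0)$, and $\varphi^{-1}:[0,\infty)\to(u_\infty,u_0]$ denotes its inverse. *)

theory Defs
  imports "HOL-Analysis.Analysis"
begin

definition seir_phi :: "(real \<Rightarrow> real) \<Rightarrow> real \<Rightarrow> real \<Rightarrow> real" where
  "seir_phi \<psi> u0 u = integral {u..u0} (\<lambda>\<xi>. 1 / (\<xi> * \<psi> \<xi>))"

definition seir_phi_inv :: "(real \<Rightarrow> real) \<Rightarrow> real \<Rightarrow> real \<Rightarrow> real \<Rightarrow> real" where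
  "seir_phi_inv \<psi> uinf u0 t = the_inv_into {uinf<..u0} (seir_phi \<psi> u0) t"

end

theory Submission
  imports Defs
begin

text \<open>Write \<open>u = \<phi>\<^sup>-\<^sup>1(t)\<close>, \<open>K = St e\<^bsup>(\<beta>/\<gamma>) Rt\<^esup>\<close> and \<open>F(u) = \<beta> N - \<beta> K u + \<gamma> ln u\<close>. Then
  \<open>S = K u\<close>, \<open>R = -(\<gamma>/\<beta>) ln u\<close>, and \<open>u' = -u \<psi>(u)\<close> because \<open>\<phi>' = -1/(u \<psi>)\<close>; so \<open>S' = -\<beta> S I\<close> and
  \<open>R' = \<gamma> I\<close> amount to \<open>I = \<psi>(u)/\<beta>\<close>, and then \<open>E = N - S - I - R = (F(u) - \<psi>(u))/\<beta>\<close>, for which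
  \<open>I' = \<delta> E - \<gamma> I\<close> is exactly the Abel equation. That the stated integral formula for \<open>E\<close>
  equals \<open>(F - \<psi>)/\<beta>\<close> is a first integral of the Abel equation: with \<open>H(u)\<close> the integral of
  \<open>e\<^bsup>\<delta>\<phi>\<^esup>\<close> over \<open>[u, u0]\<close>, both \<open>(F - \<psi>) e\<^bsup>\<delta>\<phi>\<^esup>\<close> and \<open>\<beta> (Et + K H)\<close> have derivative
  \<open>-\<beta> K e\<^bsup>\<delta>\<phi>\<^esup>\<close>, and they agree at \<open>u0\<close>.

  The same identity gives \<open>\<psi> < F\<close>, and \<open>F(u) \<le> \<gamma> (u - uinf)/uinf\<close> by concavity since \<open>F(uinf) = 0\<close>.
  Hence \<open>1/(u \<psi>) \<ge> c/(u - uinf)\<close>, so \<open>\<phi>(u) \<ge> c ln ((u0 - uinf)/(u - uinf))\<close> is unbounded near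
  \<open>uinf\<close> and \<open>\<phi>\<close> is a bijection from \<open>(uinf, u0]\<close> onto \<open>[0, \<infinity>)\<close>.\<close>

lemma continuous_on_locally:
  fixes f :: "'a::topological_space \<Rightarrow> 'b::topological_space"
  assumes "\<And>x. x \<in> S \<Longrightarrow> \<exists>T. open T \<and> x \<in> T \<and> continuous_on (S \<inter> T) f"
  shows "continuous_on S f"
  unfolding continuous_on_def
proof
  fix x assume "x \<in> S"
  then obtain T where T: "open T" "x \<in> T" "continuous_on (S \<inter> T) f"
    using assms by blast
  then have "(f \<longlongrightarrow> f x) (at x within S \<inter> T)"
    using \<open>x \<in> S\<close> by (simp add: continuous_on_def)
  moreover have "at x within S \<inter> T = at x within S"
    using T by (intro at_within_nhd[of _ T]) auto
  ultimately show "(f \<longlongrightarrow> f x) (at x within S)"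
    by simp
qed

lemma has_real_derivative_integral_lower:
  fixes h :: "real \<Rightarrow> real"
  assumes "continuous_on {a<..b} h" "a < x" "x < b"
  shows "((\<lambda>y. integral {y..b} h) has_real_derivative - h x) (at x)"
proof -
  define c where "c = (a + x) / 2"
  have "continuous_on {c..b} h"
    using assms(1) by (rule continuous_on_subset) (use assms in \<open>auto simp: c_def\<close>)
  then have "((\<lambda>y. integral {y..b} h) has_real_derivative - h x) (at x within {c..b})"
    by (rule integral_has_real_derivative') (use assms in \<open>auto simp: c_def\<close>)
  moreover have "x \<in> interior {c..b}"
    using assms by (auto simp: c_def)
  ultimately show ?thesis
    by (metis at_within_interior)
qed

lemma continuous_on_integral_lower:
  fixes h :: "real \<Rightarrow> real"
  assumes "continuous_on {a<..b} h"
  shows "continuous_on {a<..b} (\<lambda>y. integral {y..b} h)"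
proof (rule continuous_on_locally)
  fix x assume x: "x \<in> {a<..b}"
  define c where "c = (a + x) / 2"
  have c: "a < c" "c < x"
    using x by (auto simp: c_def)
  have "continuous_on {c..b} h"
    using assms by (rule continuous_on_subset) (use c in auto)
  then have "continuous_on {c..b} (\<lambda>y. integral {y..b} h)"
    by (intro indefinite_integral_continuous_1' integrable_continuous_interval)
  moreover have "{a<..b} \<inter> {c<..} \<subseteq> {c..b}"
    by auto
  ultimately have "continuous_on ({a<..b} \<inter> {c<..}) (\<lambda>y. integral {y..b} h)"
    by (rule continuous_on_subset)
  then show "\<exists>T. open T \<and> x \<in> T \<and> continuous_on ({a<..b} \<inter> T) (\<lambda>y. integral {y..b} h)"
    using c by (intro exI[of _ "{c<..}"]) auto
qed

lemma log_lower_bound_of_derivative_bound: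
  fixes \<phi> f :: "real \<Rightarrow> real"
  assumes cont: "continuous_on {a<..b} \<phi>"
    and deriv: "\<And>x. a < x \<Longrightarrow> x < b \<Longrightarrow> (\<phi> has_real_derivative - f x) (at x)"
    and bound: "\<And>x. a < x \<Longrightarrow> x < b \<Longrightarrow> c / (x - a) \<le> f x"
    and "a < u" "u \<le> b"
  shows "\<phi> b + c * (ln (b - a) - ln (u - a)) \<le> \<phi> u"
proof -
  define k where "k u = \<phi> u - c * (ln (b - a) - ln (u - a))" for u
  have "k b \<le> k u"
  proof (rule DERIV_nonpos_imp_decreasing_open[of u b k])
    show "continuous_on {u..b} k"
      unfolding k_def using assms
      by (intro continuous_intros continuous_on_subset[OF cont]) auto
    fix x assume "u < x" "x < b"
    then have x: "a < x" "x < b"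
      using assms by auto
    then have "(k has_real_derivative - f x + c / (x - a)) (at x)"
      unfolding k_def by (auto intro!: derivative_eq_intros deriv simp: field_simps)
    moreover have "- f x + c / (x - a) \<le> 0"
      using bound[OF x] by simp
    ultimately show "\<exists>y. (k has_real_derivative y) (at x) \<and> y \<le> 0"
      by blast
  qed (use assms in auto)
  then show ?thesis
    by (simp add: k_def)
qed

lemma unbounded_at_left_of_log_derivative_bound:
  fixes \<phi> f :: "real \<Rightarrow> real"
  assumes cont: "continuous_on {a<..b} \<phi>"
    and deriv: "\<And>x. a < x \<Longrightarrow> x < b \<Longrightarrow> (\<phi> has_real_derivative - f x) (at x)"
    and bound: "\<And>x. a < x \<Longrightarrow> x < b \<Longrightarrow> c / (x - a) \<le> f x"
    and "a < b" "c > 0"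
  shows "\<exists>x\<in>{a<..<b}. M \<le> \<phi> x"
proof -
  define m where "m = max (M - \<phi> b) 1"
  have m: "M - \<phi> b \<le> m" "0 < m"
    by (auto simp: m_def)
  define x where "x = a + (b - a) * exp (- m / c)"
  have "exp (- m / c) < 1"
    using m \<open>c > 0\<close> by simp
  then have "(b - a) * exp (- m / c) < b - a" "0 < (b - a) * exp (- m / c)"
    using \<open>a < b\<close> by (simp_all add: mult_less_cancel_left1)
  then have x: "a < x" "x < b"
    unfolding x_def by linarith+
  have "c * (ln (b - a) - ln (x - a)) = m"
    using \<open>a < b\<close> \<open>c > 0\<close> by (simp add: x_def ln_mult)
  then have "M \<le> \<phi> x"
    using log_lower_bound_of_derivative_bound[OF cont deriv bound, of x] x m by linarith
  with x show ?thesis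
    by auto
qed

locale decreasing_onto_nonneg =
  fixes f f' :: "real \<Rightarrow> real" and a b :: real
  assumes continuous: "continuous_on {a<..b} f"
    and has_derivative: "\<And>x. a < x \<Longrightarrow> x < b \<Longrightarrow> (f has_real_derivative f' x) (at x)"
    and derivative_neg: "\<And>x. a < x \<Longrightarrow> x < b \<Longrightarrow> f' x < 0"
    and right_end: "f b = 0"
    and unbounded: "\<And>M. \<exists>x\<in>{a<..<b}. M \<le> f x"
begin

abbreviation f_inv :: "real \<Rightarrow> real" where
  "f_inv \<equiv> the_inv_into {a<..b} f"

lemma strict_decreasing:
  assumes "a < u" "u < v" "v \<le> b"
  shows "f v < f u"
proof (rule DERIV_neg_imp_decreasing_open[OF \<open>u < v\<close>])
  show "continuous_on {u..v} f"
    using continuous by (rule continuous_on_subset) (use assms in auto)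
  show "\<exists>y. (f has_real_derivative y) (at x) \<and> y < 0" if "u < x" "x < v" for x
    using has_derivative derivative_neg that assms by fastforce
qed

lemma inj: "inj_on f {a<..b}"
  by (rule inj_onI, rule ccontr) (auto dest!: strict_decreasing simp: neq_iff)

lemma interval_subset_image:
  assumes "a < x" "x \<le> b"
  shows "{0..f x} \<subseteq> f ` {x..b}"
proof
  fix t assume t: "t \<in> {0..f x}"
  have "continuous_on {x..b} f"
    using continuous by (rule continuous_on_subset) (use assms in auto)
  then obtain y where "x \<le> y" "y \<le> b" "f y = t"
    using IVT2'[of f b t x] t assms right_end by auto
  then show "t \<in> f ` {x..b}"
    by auto
qed

lemma image_eq: "f ` {a<..b} = {0..}"
proof
  show "f ` {a<..b} \<subseteq> {0..}"
    using strict_decreasing right_end by (force simp: le_less)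
  show "{0..} \<subseteq> f ` {a<..b}"
  proof
    fix t :: real assume "t \<in> {0..}"
    obtain x where "x \<in> {a<..<b}" "t \<le> f x"
      using unbounded by blast
    with \<open>t \<in> {0..}\<close> interval_subset_image[of x] show "t \<in> f ` {a<..b}"
      by force
  qed
qed

lemma f_inv_mem: "t \<ge> 0 \<Longrightarrow> f_inv t \<in> {a<..b}"
  using the_inv_into_into[OF inj _ order_refl] image_eq by auto

lemma f_f_inv: "t \<ge> 0 \<Longrightarrow> f (f_inv t) = t"
  using f_the_inv_into_f[OF inj] image_eq by auto

lemma f_inv_zero: "f_inv 0 = b"
  using the_inv_into_f_f[OF inj, of b] right_end strict_decreasing f_inv_mem by fastforce

lemma f_inv_less:
  assumes "t > 0"
  shows "f_inv t < b"
proof -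
  have "f_inv t \<noteq> b"
    using f_f_inv[of t] right_end assms by auto
  then show ?thesis
    using f_inv_mem[of t] assms by auto
qed

lemma continuous_on_f_inv: "continuous_on {0..} f_inv"
proof (rule continuous_on_locally)
  fix t :: real assume "t \<in> {0..}"
  obtain x where x: "x \<in> {a<..<b}" "t + 1 \<le> f x"
    using unbounded by blast
  have "continuous_on (f ` {x..b}) f_inv"
  proof (rule continuous_on_inv)
    show "continuous_on {x..b} f"
      using continuous by (rule continuous_on_subset) (use x in auto)
    show "\<forall>y\<in>{x..b}. f_inv (f y) = y"
      using the_inv_into_f_f[OF inj] x by auto
  qed simp
  moreover have "{0..} \<inter> {t - 1<..<t + 1} \<subseteq> f ` {x..b}"
    using interval_subset_image[of x] x by force
  ultimately show "\<exists>T. open T \<and> t \<in> T \<and> continuous_on ({0..} \<inter> T) f_inv"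
    by (intro exI[of _ "{t - 1<..<t + 1}"]) (auto elim: continuous_on_subset)
qed

lemma has_derivative_f_inv:
  assumes "t > 0"
  shows "(f_inv has_real_derivative inverse (f' (f_inv t))) (at t)"
proof (rule DERIV_inverse_function[where a = 0 and b = "t + 1"])
  have "a < f_inv t" "f_inv t < b"
    using f_inv_mem[of t] f_inv_less[of t] assms by auto
  then show "(f has_real_derivative f' (f_inv t)) (at (f_inv t))" "f' (f_inv t) \<noteq> 0"
    using has_derivative derivative_neg by (auto simp: less_imp_neq)
  show "isCont f_inv t"
    using continuous_on_interior[OF continuous_on_f_inv, of t] assms by simp
qed (use assms f_f_inv in auto)

end

definition seir_ivp_solution ::
  "real \<Rightarrow> real \<Rightarrow> real \<Rightarrow> real \<Rightarrow> real \<Rightarrow> real \<Rightarrow> real \<Rightarrow>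
    (real \<Rightarrow> real) \<Rightarrow> (real \<Rightarrow> real) \<Rightarrow> (real \<Rightarrow> real) \<Rightarrow> (real \<Rightarrow> real) \<Rightarrow> bool"
  where "seir_ivp_solution \<beta> \<gamma> \<delta> S0 E0 I0 R0 S E I R \<longleftrightarrow>
    continuous_on {0..} S \<and> continuous_on {0..} E \<and> continuous_on {0..} I \<and> continuous_on {0..} R
    \<and> S C1_differentiable_on {0<..} \<and> E C1_differentiable_on {0<..}
    \<and> I C1_differentiable_on {0<..} \<and> R C1_differentiable_on {0<..}
    \<and> (\<forall>t>0. (S has_real_derivative (-\<beta> * S t * I t)) (at t)
        \<and> (E has_real_derivative (\<beta> * S t * I t - \<delta> * E t)) (at t)
        \<and> (I has_real_derivative (\<delta> * E t - \<gamma> * I t)) (at t)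
        \<and> (R has_real_derivative (\<gamma> * I t)) (at t))
    \<and> S 0 = S0 \<and> E 0 = E0 \<and> I 0 = I0 \<and> R 0 = R0"

lemma C1_differentiable_on_open_halfline:
  fixes g g' :: "real \<Rightarrow> real"
  assumes "\<And>t. t > 0 \<Longrightarrow> (g has_real_derivative g' t) (at t)" "continuous_on {0..} g'"
  shows "g C1_differentiable_on {0<..}"
  unfolding C1_differentiable_on_def
proof (intro exI conjI ballI)
  show "(g has_vector_derivative g' t) (at t)" if "t \<in> {0<..}" for t
    using assms(1) that by (simp add: has_real_derivative_iff_has_vector_derivative)
  show "continuous_on {0<..} g'"
    using assms(2) by (rule continuous_on_subset) auto
qed

lemma seir_ivp_solutionI:
  assumes cont: "continuous_on {0..} S" "continuous_on {0..} E" "continuous_on {0..} I"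
      "continuous_on {0..} R"
    and deriv: "\<And>t. t > 0 \<Longrightarrow> (S has_real_derivative (-\<beta> * S t * I t)) (at t)"
      "\<And>t. t > 0 \<Longrightarrow> (E has_real_derivative (\<beta> * S t * I t - \<delta> * E t)) (at t)"
      "\<And>t. t > 0 \<Longrightarrow> (I has_real_derivative (\<delta> * E t - \<gamma> * I t)) (at t)"
      "\<And>t. t > 0 \<Longrightarrow> (R has_real_derivative (\<gamma> * I t)) (at t)"
    and "S 0 = S0" "E 0 = E0" "I 0 = I0" "R 0 = R0"
  shows "seir_ivp_solution \<beta> \<gamma> \<delta> S0 E0 I0 R0 S E I R"
proof -
  have "S C1_differentiable_on {0<..}"
    by (rule C1_differentiable_on_open_halfline, erule deriv(1)) (intro continuous_intros cont)
  moreover have "E C1_differentiable_on {0<..}"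
    by (rule C1_differentiable_on_open_halfline, erule deriv(2)) (intro continuous_intros cont)
  moreover have "I C1_differentiable_on {0<..}"
    by (rule C1_differentiable_on_open_halfline, erule deriv(3)) (intro continuous_intros cont)
  moreover have "R C1_differentiable_on {0<..}"
    by (rule C1_differentiable_on_open_halfline, erule deriv(4)) (intro continuous_intros cont)
  ultimately show ?thesis
    using assms unfolding seir_ivp_solution_def by blast
qed

locale seir =
  fixes \<beta> \<gamma> \<delta> St Et It Rt \<alpha> :: real and \<psi> :: "real \<Rightarrow> real" and N u0 uinf :: real
  assumes N_eq: "N = St + Et + It + Rt"
    and u0_eq: "u0 = exp (-(\<beta>/\<gamma>) * Rt)"
    and uinf_eq: "uinf = exp (-(\<beta>/\<gamma>) * \<alpha>)"
    and rates_pos: "\<beta> > 0" "\<gamma> > 0" "\<delta> > 0"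
    and St_pos: "St > 0"
    and Et_pos: "Et > 0"
    and Rt_less_alpha: "Rt < \<alpha>"
    and alpha_eq: "\<alpha> = N - St * exp ((\<beta>/\<gamma>) * Rt) * exp (-(\<beta>/\<gamma>) * \<alpha>)"
    and psi_cont: "continuous_on {uinf<..u0} \<psi>"
    and psi_pos: "\<And>u. u \<in> {uinf<..u0} \<Longrightarrow> \<psi> u > 0"
    and psi_ode: "\<And>u. u \<in> {uinf<..<u0} \<Longrightarrow> \<exists>d. (\<psi> has_real_derivative d) (at u) \<and>
        d * \<psi> u - ((\<gamma> + \<delta>) / u) * \<psi> u
          = -\<delta> * ((\<beta> * N - \<beta> * St * exp ((\<beta>/\<gamma>) * Rt) * u + \<gamma> * ln u) / u)"
    and psi_init: "\<psi> u0 = \<beta> * It"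
begin

definition K :: real where
  "K = St * exp ((\<beta>/\<gamma>) * Rt)"

text \<open>\<open>F u / \<beta>\<close> is \<open>E + I = N - S - R\<close> at the state with \<open>S = K u\<close> and \<open>R = -(\<gamma>/\<beta>) ln u\<close>.\<close>
definition F :: "real \<Rightarrow> real" where
  "F u = \<beta> * N - \<beta> * K * u + \<gamma> * ln u"

definition \<phi> :: "real \<Rightarrow> real" where
  "\<phi> = seir_phi \<psi> u0"

definition H :: "real \<Rightarrow> real" where
  "H u = integral {u..u0} (\<lambda>v. exp (\<delta> * \<phi> v))"

definition U :: "real \<Rightarrow> real" where
  "U = seir_phi_inv \<psi> uinf u0"

lemma uinf_pos: "uinf > 0"
  by (simp add: uinf_eq)

lemma uinf_less_u0: "uinf < u0"
proof -
  have "(\<beta>/\<gamma>) * Rt < (\<beta>/\<gamma>) * \<alpha>"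
    using Rt_less_alpha rates_pos by (intro mult_strict_left_mono) auto
  then show ?thesis
    by (simp add: uinf_eq u0_eq)
qed

lemma K_pos: "K > 0"
  using St_pos by (simp add: K_def)

lemma K_u0: "K * u0 = St"
  by (simp add: K_def u0_eq flip: exp_add)

lemma F_uinf: "F uinf = 0"
proof -
  have "N = \<alpha> + K * uinf"
    using alpha_eq by (simp add: K_def uinf_eq)
  then show ?thesis
    using rates_pos unfolding F_def by (simp add: uinf_eq algebra_simps)
qed

lemma F_u0: "F u0 = \<beta> * (Et + It)"
proof -
  have "\<gamma> * ln u0 = - \<beta> * Rt"
    using rates_pos by (simp add: u0_eq)
  then show ?thesis
    using K_u0 unfolding F_def by (simp add: N_eq algebra_simps)
qed

lemma F_le_linear:
  assumes "uinf \<le> u"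
  shows "F u \<le> \<gamma> * (u - uinf) / uinf"
proof -
  have u: "u > 0"
    using assms uinf_pos by linarith
  have "F u = F u - F uinf"
    by (simp add: F_uinf)
  also have "\<dots> = - \<beta> * K * (u - uinf) + \<gamma> * ln (u / uinf)"
    using u uinf_pos by (simp add: F_def ln_div algebra_simps)
  also have "\<dots> \<le> \<gamma> * ln (u / uinf)"
    using rates_pos K_pos assms by simp
  also have "\<dots> \<le> \<gamma> * (u / uinf - 1)"
    using ln_le_minus_one[of "u / uinf"] u uinf_pos rates_pos by (intro mult_left_mono) auto
  also have "\<dots> = \<gamma> * (u - uinf) / uinf"
    using uinf_pos by (simp add: field_simps)
  finally show ?thesis .
qed

lemma has_derivative_F: "u > 0 \<Longrightarrow> (F has_real_derivative \<gamma> / u - \<beta> * K) (at u)"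
  unfolding F_def by (auto intro!: derivative_eq_intros simp: field_simps)

lemma continuous_on_F: "continuous_on {uinf<..u0} F"
  unfolding F_def using uinf_pos by (auto intro!: continuous_intros)

lemma has_derivative_psi:
  assumes "uinf < u" "u < u0"
  shows "(\<psi> has_real_derivative (\<gamma> + \<delta>) / u - \<delta> * F u / (u * \<psi> u)) (at u)"
proof -
  obtain d where d: "(\<psi> has_real_derivative d) (at u)"
      "d * \<psi> u - ((\<gamma> + \<delta>) / u) * \<psi> u = -\<delta> * (F u / u)"
    using psi_ode[of u] assms by (auto simp: F_def K_def)
  have "\<psi> u > 0" "u > 0"
    using psi_pos[of u] assms uinf_pos by auto
  with d(2) have "d = (\<gamma> + \<delta>) / u - \<delta> * F u / (u * \<psi> u)"
    by (simp add: field_simps)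
  with d(1) show ?thesis
    by simp
qed

lemma continuous_on_phi_integrand: "continuous_on {uinf<..u0} (\<lambda>\<xi>. 1 / (\<xi> * \<psi> \<xi>))"
  using psi_pos uinf_pos by (intro continuous_intros psi_cont) (auto simp: less_imp_neq[symmetric])

lemma continuous_on_phi: "continuous_on {uinf<..u0} \<phi>"
  unfolding \<phi>_def seir_phi_def[abs_def]
  by (rule continuous_on_integral_lower[OF continuous_on_phi_integrand])

lemma has_derivative_phi:
  "uinf < u \<Longrightarrow> u < u0 \<Longrightarrow> (\<phi> has_real_derivative - (1 / (u * \<psi> u))) (at u)"
  unfolding \<phi>_def seir_phi_def[abs_def]
  by (rule has_real_derivative_integral_lower[OF continuous_on_phi_integrand])

lemma phi_u0: "\<phi> u0 = 0"
  by (simp add: \<phi>_def seir_phi_def)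

lemma continuous_on_exp_phi: "continuous_on {uinf<..u0} (\<lambda>v. exp (\<delta> * \<phi> v))"
  by (intro continuous_intros continuous_on_phi)

lemma continuous_on_H: "continuous_on {uinf<..u0} H"
  unfolding H_def[abs_def] by (rule continuous_on_integral_lower[OF continuous_on_exp_phi])

lemma has_derivative_H:
  "uinf < u \<Longrightarrow> u < u0 \<Longrightarrow> (H has_real_derivative - exp (\<delta> * \<phi> u)) (at u)"
  unfolding H_def[abs_def] by (rule has_real_derivative_integral_lower[OF continuous_on_exp_phi])

lemma H_nonneg:
  assumes "u \<in> {uinf<..u0}"
  shows "H u \<ge> 0"
proof -
  have "continuous_on {u..u0} (\<lambda>v. exp (\<delta> * \<phi> v))"
    using continuous_on_exp_phi by (rule continuous_on_subset) (use assms in auto)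
  then show ?thesis
    unfolding H_def by (intro integral_nonneg integrable_continuous_interval) auto
qed

lemma H_u0: "H u0 = 0"
  by (simp add: H_def)

lemma first_integral:
  assumes "u \<in> {uinf<..u0}"
  shows "(F u - \<psi> u) * exp (\<delta> * \<phi> u) = \<beta> * (Et + K * H u)"
proof -
  define w where "w u = (F u - \<psi> u) * exp (\<delta> * \<phi> u) - \<beta> * K * H u" for u
  have "w u0 = w u"
  proof (cases "u = u0")
    case False
    with assms have "u < u0"
      by simp
    then show ?thesis
    proof (rule DERIV_isconst_end)
      show "continuous_on {u..u0} w"
        unfolding w_def using assms
        by (intro continuous_intros continuous_on_subset[OF continuous_on_F]
            continuous_on_subset[OF psi_cont] continuous_on_subset[OF continuous_on_phi]
            continuous_on_subset[OF continuous_on_H]) auto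
      fix x assume "u < x" "x < u0"
      with assms have x: "uinf < x" "x < u0"
        by auto
      have pos: "x > 0" "\<psi> x > 0"
        using x uinf_pos psi_pos[of x] by auto
      show "(w has_real_derivative 0) (at x)"
        unfolding w_def
        by (rule derivative_eq_intros has_derivative_F[OF pos(1)] has_derivative_psi[OF x]
            has_derivative_phi[OF x] has_derivative_H[OF x] refl)+
          (use pos in \<open>simp add: field_simps\<close>)
    qed
  qed simp
  moreover have "w u0 = \<beta> * Et"
    by (simp add: w_def F_u0 psi_init phi_u0 H_u0 algebra_simps)
  ultimately show ?thesis
    by (simp add: w_def algebra_simps)
qed

lemma psi_less_F:
  assumes "u \<in> {uinf<..u0}"
  shows "\<psi> u < F u"
proof -
  have "\<beta> * (Et + K * H u) > 0"
    using rates_pos Et_pos K_pos H_nonneg[OF assms] by (simp add: add_pos_nonneg)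
  then have "(F u - \<psi> u) * exp (\<delta> * \<phi> u) > 0"
    using first_integral[OF assms] by simp
  then show ?thesis
    by (simp add: zero_less_mult_iff)
qed

lemma phi_unbounded: "\<exists>x\<in>{uinf<..<u0}. M \<le> \<phi> x"
proof (rule unbounded_at_left_of_log_derivative_bound)
  show "continuous_on {uinf<..u0} \<phi>"
    by (rule continuous_on_phi)
  show "(\<phi> has_real_derivative - (1 / (x * \<psi> x))) (at x)" if "uinf < x" "x < u0" for x
    using has_derivative_phi that .
  show "uinf / (\<gamma> * u0) / (x - uinf) \<le> 1 / (x * \<psi> x)" if "uinf < x" "x < u0" for x
  proof -
    have x: "x > 0" "\<psi> x > 0"
      using that uinf_pos psi_pos[of x] by auto
    have "\<psi> x \<le> \<gamma> * (x - uinf) / uinf"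
      using psi_less_F[of x] F_le_linear[of x] that by simp
    then have "x * \<psi> x \<le> u0 * (\<gamma> * (x - uinf) / uinf)"
      using that x by (intro mult_mono) auto
    then show ?thesis
      using that x uinf_pos rates_pos by (simp add: field_simps)
  qed
  show "uinf / (\<gamma> * u0) > 0"
    using uinf_pos uinf_less_u0 rates_pos by simp
qed (rule uinf_less_u0)

sublocale phi: decreasing_onto_nonneg \<phi> "\<lambda>u. - (1 / (u * \<psi> u))" uinf u0
proof
  show "- (1 / (x * \<psi> x)) < 0" if "uinf < x" "x < u0" for x
    using that uinf_pos psi_pos[of x] by simp
qed (use continuous_on_phi has_derivative_phi phi_u0 phi_unbounded in auto)

lemma U_eq: "U = phi.f_inv"
  by (simp add: U_def seir_phi_inv_def[abs_def] \<phi>_def)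

lemma U_mem: "t \<ge> 0 \<Longrightarrow> U t \<in> {uinf<..u0}"
  unfolding U_eq by (rule phi.f_inv_mem)

lemma U_pos: "t \<ge> 0 \<Longrightarrow> U t > 0"
  using U_mem uinf_pos by force

lemma phi_U: "t \<ge> 0 \<Longrightarrow> \<phi> (U t) = t"
  unfolding U_eq by (rule phi.f_f_inv)

lemma U_zero: "U 0 = u0"
  unfolding U_eq by (rule phi.f_inv_zero)

lemma continuous_on_U: "continuous_on {0..} U"
  unfolding U_eq by (rule phi.continuous_on_f_inv)

lemma has_derivative_U:
  assumes "t > 0"
  shows "(U has_real_derivative - (U t * \<psi> (U t))) (at t)"
proof -
  have "U t > 0" "\<psi> (U t) > 0"
    using U_pos[of t] psi_pos U_mem[of t] assms by auto
  then show ?thesis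
    using phi.has_derivative_f_inv[OF assms] unfolding U_eq by simp
qed

definition S_sol :: "real \<Rightarrow> real" where
  "S_sol t = K * U t"

definition E_sol :: "real \<Rightarrow> real" where
  "E_sol t = Et * exp (-\<delta> * t) + K * exp (-\<delta> * t) * H (U t)"

definition R_sol :: "real \<Rightarrow> real" where
  "R_sol t = -(\<gamma>/\<beta>) * ln (U t)"

definition I_sol :: "real \<Rightarrow> real" where
  "I_sol t = N - S_sol t - E_sol t - R_sol t"

lemma E_sol_eq:
  assumes "t \<ge> 0"
  shows "E_sol t = (F (U t) - \<psi> (U t)) / \<beta>"
proof -
  have "(F (U t) - \<psi> (U t)) * exp (\<delta> * t) = \<beta> * (Et + K * H (U t))"
    using first_integral[OF U_mem] phi_U assms by metis
  then have "(F (U t) - \<psi> (U t)) / \<beta> = exp (-\<delta> * t) * (Et + K * H (U t))"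
    using rates_pos by (simp add: field_simps exp_minus)
  then show ?thesis
    by (simp add: E_sol_def algebra_simps)
qed

lemma I_sol_eq:
  assumes "t \<ge> 0"
  shows "I_sol t = \<psi> (U t) / \<beta>"
  using E_sol_eq[OF assms] rates_pos
  by (simp add: I_sol_def S_sol_def R_sol_def F_def field_simps)

lemma E_sol_conservation: "E_sol = (\<lambda>t. N - S_sol t - I_sol t - R_sol t)"
  by (simp add: I_sol_def)

lemma has_derivative_S_sol: "t > 0 \<Longrightarrow> (S_sol has_real_derivative -\<beta> * S_sol t * I_sol t) (at t)"
  unfolding S_sol_def[abs_def]
  by (rule derivative_eq_intros has_derivative_U refl | assumption)+
    (use rates_pos I_sol_eq in \<open>simp add: S_sol_def\<close>)

lemma has_derivative_R_sol:
  assumes "t > 0"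
  shows "(R_sol has_real_derivative \<gamma> * I_sol t) (at t)"
  unfolding R_sol_def[abs_def]
  by (rule derivative_eq_intros has_derivative_U[OF assms] U_pos[OF less_imp_le[OF assms]] refl)+
    (use assms rates_pos I_sol_eq[of t] U_pos[of t] in \<open>simp_all add: field_simps\<close>)

lemma has_derivative_I_sol:
  assumes "t > 0"
  shows "(I_sol has_real_derivative \<delta> * E_sol t - \<gamma> * I_sol t) (at t)"
proof -
  have U: "uinf < U t" "U t < u0" "\<psi> (U t) > 0"
    using U_mem[of t] phi.f_inv_less[OF assms] psi_pos[of "U t"] assms by (auto simp: U_eq)
  have "((\<lambda>s. \<psi> (U s) / \<beta>) has_real_derivative
      ((\<gamma> + \<delta>) / U t - \<delta> * F (U t) / (U t * \<psi> (U t))) * - (U t * \<psi> (U t)) / \<beta>) (at t)"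
    by (intro DERIV_cdivide DERIV_chain2[OF has_derivative_psi has_derivative_U] U assms)
  also have "((\<gamma> + \<delta>) / U t - \<delta> * F (U t) / (U t * \<psi> (U t))) * - (U t * \<psi> (U t)) / \<beta>
      = \<delta> * E_sol t - \<gamma> * I_sol t"
    using assms U rates_pos uinf_pos by (simp add: E_sol_eq I_sol_eq field_simps)
  finally show ?thesis
    by (rule has_field_derivative_transform_within_open[of _ _ _ "{0<..}"])
      (use assms I_sol_eq in auto)
qed

lemma has_derivative_E_sol:
  assumes "t > 0"
  shows "(E_sol has_real_derivative \<beta> * S_sol t * I_sol t - \<delta> * E_sol t) (at t)"
proof -
  have "((\<lambda>t. N - S_sol t - I_sol t - R_sol t) has_real_derivative
      0 - (-\<beta> * S_sol t * I_sol t) - (\<delta> * E_sol t - \<gamma> * I_sol t) - \<gamma> * I_sol t) (at t)"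
    by (intro derivative_intros has_derivative_S_sol has_derivative_I_sol has_derivative_R_sol assms)
  then show ?thesis
    by (simp add: E_sol_conservation[symmetric])
qed

lemma continuous_on_sol:
  "continuous_on {0..} S_sol" "continuous_on {0..} E_sol"
  "continuous_on {0..} I_sol" "continuous_on {0..} R_sol"
proof -
  show S: "continuous_on {0..} S_sol"
    unfolding S_sol_def[abs_def] by (intro continuous_intros continuous_on_U)
  show R: "continuous_on {0..} R_sol"
    unfolding R_sol_def[abs_def] using U_pos
    by (intro continuous_intros continuous_on_U) (auto simp: less_imp_neq[symmetric])
  have "continuous_on {0..} (\<lambda>t. \<psi> (U t) / \<beta>)"
    using U_mem rates_pos
    by (intro continuous_intros continuous_on_compose2[OF psi_cont continuous_on_U]) auto
  then show I: "continuous_on {0..} I_sol"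
    by (rule continuous_on_eq) (simp add: I_sol_eq)
  show "continuous_on {0..} E_sol"
    unfolding E_sol_conservation by (intro continuous_intros S I R)
qed

lemma initial_values: "S_sol 0 = St" "E_sol 0 = Et" "I_sol 0 = It" "R_sol 0 = Rt"
proof -
  have "ln u0 = -(\<beta>/\<gamma>) * Rt"
    by (simp add: u0_eq)
  then show "S_sol 0 = St" "E_sol 0 = Et" "R_sol 0 = Rt"
    using K_u0 rates_pos by (simp_all add: S_sol_def E_sol_def R_sol_def U_zero H_u0)
  then show "I_sol 0 = It"
    unfolding I_sol_def by (simp add: N_eq)
qed

theorem seir_ivp_solution_explicit: "seir_ivp_solution \<beta> \<gamma> \<delta> St Et It Rt S_sol E_sol I_sol R_sol"
  by (intro seir_ivp_solutionI continuous_on_sol has_derivative_S_sol has_derivative_E_sol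
      has_derivative_I_sol has_derivative_R_sol initial_values)

end

theorem theorem4:
  fixes \<beta> \<gamma> \<delta> St Et It Rt \<alpha> :: real and \<psi> :: "real \<Rightarrow> real"
    and N u0 uinf :: real and S E I R :: "real \<Rightarrow> real"
  defines "N \<equiv> St + Et + It + Rt"
  defines "u0 \<equiv> exp (-(\<beta>/\<gamma>) * Rt)"
  defines "uinf \<equiv> exp (-(\<beta>/\<gamma>) * \<alpha>)"
  defines "S \<equiv> (\<lambda>t. St * exp ((\<beta>/\<gamma>) * Rt) * seir_phi_inv \<psi> uinf u0 t)"
  defines "E \<equiv> (\<lambda>t. Et * exp (-\<delta> * t) + St * exp ((\<beta>/\<gamma>) * Rt) * exp (-\<delta> * t)
       * integral {seir_phi_inv \<psi> uinf u0 t..u0} (\<lambda>v. exp (\<delta> * seir_phi \<psi> u0 v)))"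
  defines "I \<equiv> (\<lambda>t. N - St * exp ((\<beta>/\<gamma>) * Rt) * seir_phi_inv \<psi> uinf u0 t
       + (\<gamma>/\<beta>) * ln (seir_phi_inv \<psi> uinf u0 t) - Et * exp (-\<delta> * t)
       - St * exp ((\<beta>/\<gamma>) * Rt) * exp (-\<delta> * t)
       * integral {seir_phi_inv \<psi> uinf u0 t..u0} (\<lambda>v. exp (\<delta> * seir_phi \<psi> u0 v)))"
  defines "R \<equiv> (\<lambda>t. -(\<gamma>/\<beta>) * ln (seir_phi_inv \<psi> uinf u0 t))"
  assumes pos: "\<beta> > 0" "\<gamma> > 0" "\<delta> > 0"
    and Npos: "N > 0"
    and A1: "It > 0"
    and A2: "Et > (\<gamma>/\<delta>) * It"
    and A3: "St > \<delta> * Et / (\<beta> * It)"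
    and A4: "Rt \<ge> 0" "N > St * exp ((\<beta>/\<gamma>) * Rt) + Rt"
    and alpha: "Rt < \<alpha>" "\<alpha> < N"
      "\<alpha> = N - St * exp ((\<beta>/\<gamma>) * Rt) * exp (-(\<beta>/\<gamma>) * \<alpha>)"
    and A5: "St < (\<gamma>/\<beta>) * exp ((\<beta>/\<gamma>) * (\<alpha> - Rt))"
    and psi_cont: "continuous_on {uinf<..u0} \<psi>"
    and psi_pos: "\<forall>u\<in>{uinf<..u0}. \<psi> u > 0"
    and psi_C1: "\<psi> C1_differentiable_on {uinf<..<u0}"
    and psi_ode: "\<forall>u\<in>{uinf<..<u0}. \<exists>d. (\<psi> has_real_derivative d) (at u) \<and>
        d * \<psi> u - ((\<gamma> + \<delta>) / u) * \<psi> u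
          = -\<delta> * ((\<beta> * N - \<beta> * St * exp ((\<beta>/\<gamma>) * Rt) * u + \<gamma> * ln u) / u)"
    and psi_init: "\<psi> u0 = \<beta> * It"
  shows "continuous_on {0..} S \<and> continuous_on {0..} E \<and> continuous_on {0..} I \<and> continuous_on {0..} R
    \<and> S C1_differentiable_on {0<..} \<and> E C1_differentiable_on {0<..}
    \<and> I C1_differentiable_on {0<..} \<and> R C1_differentiable_on {0<..}
    \<and> (\<forall>t>0. (S has_real_derivative (-\<beta> * S t * I t)) (at t)
        \<and> (E has_real_derivative (\<beta> * S t * I t - \<delta> * E t)) (at t)
        \<and> (I has_real_derivative (\<delta> * E t - \<gamma> * I t)) (at t)
        \<and> (R has_real_derivative (\<gamma> * I t)) (at t))
    \<and> S 0 = St \<and> E 0 = Et \<and> I 0 = It \<and> R 0 = Rt"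
proof -
  \<comment> \<open>Of (A1)--(A5) only \<open>Et > 0\<close> and \<open>St > 0\<close> are needed: the remaining hypotheses serve to
    construct \<open>\<alpha>\<close> and \<open>\<psi>\<close>, which are given here.\<close>
  have "(\<gamma>/\<delta>) * It > 0"
    using pos A1 by simp
  with A2 have "Et > 0"
    by linarith
  then have "\<delta> * Et / (\<beta> * It) > 0"
    using pos A1 by simp
  with A3 have "St > 0"
    by linarith
  interpret seir \<beta> \<gamma> \<delta> St Et It Rt \<alpha> \<psi> N u0 uinf
    by unfold_locales (use \<open>Et > 0\<close> \<open>St > 0\<close> assms in \<open>auto simp: N_def u0_def uinf_def\<close>)
  have "S = S_sol" "E = E_sol" "R = R_sol"
    by (auto simp: S_def E_def R_def S_sol_def E_sol_def R_sol_def K_def U_def H_def \<phi>_def)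
  moreover have "I = I_sol"
    by (auto simp: I_def I_sol_def S_sol_def E_sol_def R_sol_def K_def U_def H_def \<phi>_def)
  ultimately show ?thesis
    using seir_ivp_solution_explicit unfolding seir_ivp_solution_def by simp
qed

end
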